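(* (a) If $0<\alpha\le\frac{1}{19}$ and $2+2\alpha<p<\frac52+2\alpha$, then $$\int_0^1 I_t\left(\frac{2+\alpha}{p},1-\frac{2+\alpha}{p}\right)t^{2p-4\alpha-5}(1-t^4)^\alpha\,dt-\frac{1}{4(\alpha+1)}\le0.$$ (b) If $0<\alpha\le\frac{1}{15000}$ and $\frac52+2\alpha\le p\le3+2\alpha$, then the same inequality holds.
   Context: $B(x,y)=\int_0^1 u^{x-1}(1-u)^{y-1}du$ is the Beta function, $B_t(x,y)=\int_0^t u^{x-1}(1-u)^{y-1}du$ the incomplete Beta function, and $I_t(x,y)=B_t(x,y)/B(x,y)$ the regularized incomplete Beta function. *)

theory Defs
  imports "HOL-Analysis.Analysis"
begin

text \<open>Incomplete Beta function B_t(x,y) = int_0^t u^(x-1) (1-u)^(y-1) du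
  (Henstock-Kurzweil integral; the integrand is nonnegative, so this agrees
  with the Lebesgue integral whenever the latter exists).\<close>
definition incBeta :: "real \<Rightarrow> real \<Rightarrow> real \<Rightarrow> real" where
  "incBeta t x y = integral {0..t} (\<lambda>u. u powr (x - 1) * (1 - u) powr (y - 1))"

definition regIncBeta :: "real \<Rightarrow> real \<Rightarrow> real \<Rightarrow> real" where
  "regIncBeta t x y = incBeta t x y / Beta x y"

end

theory Submission
  imports Defs
begin

text \<open>Since (1 - t^4)^\<alpha> \<le> 1, it suffices to bound the Mellin transform
  M = int_0^1 t^(q-1) I_t(a,b) dt with a = (2+\<alpha>)/p, b = 1 - a and q = 2p - 4\<alpha> - 4.
  Integrating by parts against the Beta density gives
  M = B(a,b)^(-1) int_0^1 (1 - u^q)/q u^(a-1) (1-u)^(b-1) du.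
  Bounding (1 - u^q)/q either by -ln u \<le> (1-u)/sqrt u, or by a polynomial multiple of 1 - u
  obtained from u^q \<ge> u^s (1 + (s-q)(1-u)) with s = 1, 2, leaves Beta values B(a+m, b+1),
  which for a + b = 1 are explicit multiples of B(a,b). What remains is a polynomial
  inequality in \<alpha> and d = p - 2 - 2\<alpha> on each of the ranges d \<le> 1/8, 1/8 \<le> d \<le> 1/2
  and 1/2 \<le> d \<le> 1.\<close>

lemma one_sub_powr_div_le_neg_ln:
  fixes u q :: real
  assumes "0 < u" "0 < q"
  shows "(1 - u powr q) / q \<le> - ln u"
proof -
  have "1 + q * ln u \<le> exp (q * ln u)" by (rule exp_ge_add_one_self)
  also have "exp (q * ln u) = u powr q" using assms by (simp add: powr_def)
  finally show ?thesis using assms by (simp add: divide_le_eq mult.commute)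
qed

lemma two_ln_le_minus_inverse:
  fixes x :: real
  assumes "1 \<le> x"
  shows "2 * ln x \<le> x - 1 / x"
proof -
  let ?h = "\<lambda>x::real. x - 1 / x - 2 * ln x"
  have "?h 1 \<le> ?h x"
  proof (rule DERIV_nonneg_imp_nondecreasing[OF assms])
    fix y :: real assume "1 \<le> y" "y \<le> x"
    then have "(?h has_real_derivative (y - 1)\<^sup>2 / y\<^sup>2) (at y)"
      by (auto intro!: derivative_eq_intros simp: field_simps power2_eq_square)
    then show "\<exists>d. (?h has_real_derivative d) (at y) \<and> 0 \<le> d" by auto
  qed
  then show ?thesis by simp
qed

lemma neg_ln_le_one_minus_mult_powr:
  fixes u :: real
  assumes "0 < u" "u \<le> 1"
  shows "- ln u \<le> (1 - u) * u powr (- 1/2)"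
proof -
  define x where "x = u powr (- 1/2)"
  have "1 \<le> x" unfolding x_def using assms powr_le1[of "1/2" u]
    by (simp add: powr_minus one_le_inverse_iff)
  have "2 * ln x = - ln u" unfolding x_def using assms by simp
  moreover have "x - 1 / x = (1 - u) * x"
    unfolding x_def using assms by (simp add: powr_minus_divide field_simps powr_add[symmetric])
  ultimately show ?thesis using two_ln_le_minus_inverse[OF \<open>1 \<le> x\<close>] by (simp add: x_def)
qed

lemma powr_mult_one_plus_le_powr:
  fixes u q s :: real
  assumes "0 < u" "q \<le> s"
  shows "u powr s * (1 + (s - q) * (1 - u)) \<le> u powr q"
proof -
  have "(s - q) * (1 - u) \<le> (s - q) * - ln u"
    using assms ln_le_minus_one[of u] by (intro mult_left_mono) auto
  also have "\<dots> + 1 \<le> exp ((s - q) * - ln u)" by (subst add.commute) (rule exp_ge_add_one_self)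
  also have "exp ((s - q) * - ln u) = u powr (q - s)" using assms by (simp add: powr_def algebra_simps)
  finally have "1 + (s - q) * (1 - u) \<le> u powr (q - s)" by simp
  then have "u powr s * (1 + (s - q) * (1 - u)) \<le> u powr s * u powr (q - s)"
    by (rule mult_left_mono) simp
  also have "\<dots> = u powr q" by (simp flip: powr_add)
  finally show ?thesis .
qed

lemma integral_mult_le_integral:
  fixes g w :: "real \<Rightarrow> real"
  assumes g: "g integrable_on {a..b}" "\<And>x. x \<in> {a..b} \<Longrightarrow> 0 \<le> g x"
    and w: "continuous_on {a..b} w" "\<And>x. x \<in> {a..b} \<Longrightarrow> w x \<le> 1"
  shows "integral {a..b} (\<lambda>x. w x * g x) \<le> integral {a..b} g"
proof (rule integral_le)
  have "bounded (w ` {a..b})"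
    using compact_continuous_image[OF w(1)] by (simp add: compact_imp_bounded)
  then show "(\<lambda>x. w x * g x) integrable_on {a..b}"
    using absolutely_integrable_bounded_measurable_product_real[of w "{a..b}" g]
      continuous_imp_measurable_on_sets_lebesgue[OF w(1)] nonnegative_absolutely_integrable_1[OF g]
    by (auto dest: set_lebesgue_integral_eq_integral(1))
  show "w x * g x \<le> g x" if "x \<in> {a..b}" for x
    using mult_right_mono[OF w(2) g(2)] that by simp
qed (rule g(1))

lemma Beta_pos_real: "0 < x \<Longrightarrow> 0 < y \<Longrightarrow> 0 < Beta x (y :: real)"
  by (simp add: Beta_def)

lemma not_nonpos_Ints_of_pos: "0 < x \<Longrightarrow> (x :: real) \<notin> \<int>\<^sub>\<le>\<^sub>0"
  by (auto elim!: nonpos_Ints_cases)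

lemma Beta_right_one:
  fixes x :: real
  assumes "0 < x"
  shows "Beta x 1 = 1 / x"
  using Gamma_plus1[OF not_nonpos_Ints_of_pos[OF assms]] Gamma_real_pos[OF assms] by (simp add: Beta_def)

lemma inverse_le_Beta:
  fixes a b :: real
  assumes "0 < a" "a \<le> 1" "0 < b"
  shows "1 / b \<le> Beta a b"
  using Beta_real_mono[of a 1 b b] Beta_right_one[of b] assms by (simp add: Beta_commute)

context
  fixes a b :: real
  assumes pos: "0 < a" "0 < b" and sum_one: "a + b = 1"
begin

lemma Beta_plus1_right_sum_one: "Beta a (b + 1) = b * Beta a b"
  using Beta_plus1_right[of b a] not_nonpos_Ints_of_pos pos sum_one by simp

lemma Beta_plus1_plus1_sum_one: "Beta (a + 1) (b + 1) = a * b / 2 * Beta a b"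
proof -
  have "a + (b + 1) = 2" using sum_one by simp
  then have "2 * Beta (a + 1) (b + 1) = a * Beta a (b + 1)"
    using Beta_plus1_left[of a "b + 1"] not_nonpos_Ints_of_pos pos by metis
  then show ?thesis by (simp add: Beta_plus1_right_sum_one)
qed

lemma Beta_plus2_plus1_sum_one: "Beta (a + 2) (b + 1) = (a + 1) * a * b / 6 * Beta a b"
proof -
  have "a + 1 + (b + 1) = 3" using sum_one by simp
  then have "3 * Beta (a + 2) (b + 1) = (a + 1) * Beta (a + 1) (b + 1)"
    using Beta_plus1_left[of "a + 1" "b + 1"] not_nonpos_Ints_of_pos[of "a + 1"] pos by (simp add: add.commute)
  then show ?thesis by (simp add: Beta_plus1_plus1_sum_one)
qed

end

lemma regIncBeta_nonneg:
  fixes a b t :: real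
  assumes "0 < a" "0 < b" "0 \<le> t" "t \<le> 1"
  shows "0 \<le> regIncBeta t a b"
proof -
  have "(\<lambda>u. u powr (a - 1) * (1 - u) powr (b - 1)) integrable_on {0..t}"
    by (rule integrable_on_subinterval[OF integrable_Beta'[OF assms(1,2)]]) (use assms in auto)
  then have "0 \<le> incBeta t a b"
    unfolding incBeta_def by (rule integral_nonneg) (use assms in auto)
  then show ?thesis
    using Beta_pos_real[OF assms(1,2)] by (simp add: regIncBeta_def)
qed

lemma continuous_on_regIncBeta:
  fixes a b :: real
  assumes "0 < a" "0 < b"
  shows "continuous_on {0..1} (\<lambda>t. regIncBeta t a b)"
  unfolding regIncBeta_def incBeta_def
  by (intro continuous_on_divide continuous_on_const indefinite_integral_continuous_1
        integrable_Beta' assms) (use Beta_pos_real[OF assms] in auto)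

lemma has_real_derivative_regIncBeta:
  fixes a b t :: real
  assumes "0 < a" "0 < b" "t \<in> {0<..<1}"
  shows "((\<lambda>t. regIncBeta t a b) has_real_derivative
           t powr (a - 1) * (1 - t) powr (b - 1) / Beta a b) (at t)"
proof -
  let ?\<phi> = "\<lambda>u::real. u powr (a - 1) * (1 - u) powr (b - 1)"
  have "isCont ?\<phi> t"
    using assms(3) by (intro continuous_intros) auto
  then have "continuous (at t within {0..1} - {}) ?\<phi>"
    by (simp add: continuous_at_imp_continuous_within)
  from integral_has_vector_derivative_continuous_at[OF integrable_Beta'[OF assms(1,2)] _ _ this]
  have "((\<lambda>t. integral {0..t} ?\<phi>) has_vector_derivative ?\<phi> t) (at t within {0..1})"
    using assms(3) by auto
  moreover have "at t within {0..1} = at t"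
    using assms(3) by (intro at_within_interior) auto
  ultimately have "((\<lambda>t. integral {0..t} ?\<phi>) has_real_derivative ?\<phi> t) (at t)"
    by (simp add: has_real_derivative_iff_has_vector_derivative)
  then show ?thesis
    unfolding regIncBeta_def incBeta_def by (rule DERIV_cdivide)
qed

lemma integrable_one_minus_powr_mult_Beta_density:
  fixes a b q :: real
  assumes a: "0 < a" and b: "0 < b" and q: "0 < q"
  shows "(\<lambda>u. (1 - u powr q) / q * (u powr (a - 1) * (1 - u) powr (b - 1))) integrable_on {0<..<1}"
proof (rule measurable_bounded_by_integrable_imp_integrable_real)
  show "(\<lambda>u. (1 - u powr q) / q * (u powr (a - 1) * (1 - u) powr (b - 1)))
          \<in> borel_measurable (lebesgue_on {0<..<1})"
    using q by (intro continuous_imp_measurable_on_sets_lebesgue continuous_intros) auto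
  show "(\<lambda>u. u powr (a - 1) * (1 - u) powr (b - 1) / q) integrable_on {0<..<1}"
    using integrable_Beta'[OF a b] by (intro integrable_on_divide) (simp add: integrable_on_Icc_iff_Ioo)
  show "\<bar>(1 - u powr q) / q * (u powr (a - 1) * (1 - u) powr (b - 1))\<bar>
          \<le> u powr (a - 1) * (1 - u) powr (b - 1) / q" if "u \<in> {0<..<1}" for u
  proof -
    have "0 \<le> 1 - u powr q" "1 - u powr q \<le> 1"
      using that q powr_le1[of q u] by auto
    then show ?thesis
      using that q by (simp add: abs_mult mult_le_cancel_right1 divide_right_mono)
  qed
qed auto

lemma has_integral_powr_mult_regIncBeta:
  fixes a b q :: real
  assumes a: "0 < a" and b: "0 < b" and q: "0 < q"
  defines "h \<equiv> \<lambda>u. (1 - u powr q) / q * (u powr (a - 1) * (1 - u) powr (b - 1))"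
  shows "((\<lambda>t. t powr (q - 1) * regIncBeta t a b) has_integral integral {0<..<1} h / Beta a b) {0..1}"
proof -
  \<comment> \<open>\<open>G\<close> vanishes at 1 and \<open>F\<close> at 0, so integration by parts leaves no boundary terms.\<close>
  define G where "G = (\<lambda>t::real. (t powr q - 1) / q)"
  define F where "F = (\<lambda>t. regIncBeta t a b)"
  define F' where "F' = (\<lambda>t::real. t powr (a - 1) * (1 - t) powr (b - 1) / Beta a b)"
  have "((\<lambda>u. - h u / Beta a b) has_integral - integral {0<..<1} h / Beta a b) {0<..<1}"
    unfolding h_def
    by (intro has_integral_divide has_integral_neg integrable_integral
        integrable_one_minus_powr_mult_Beta_density a b q)
  moreover have "G u * F' u = - h u / Beta a b" for u
    unfolding G_def F'_def h_def by (simp add: divide_simps) (simp add: algebra_simps)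
  moreover have "G 1 = 0" "F 0 = 0"
    by (simp_all add: G_def F_def regIncBeta_def incBeta_def)
  ultimately have parts: "((\<lambda>t. G t * F' t) has_integral
                           G 1 * F 1 - G 0 * F 0 - integral {0<..<1} h / Beta a b) {0..1}"
    by (simp add: has_integral_Icc_iff_Ioo)
  have "continuous_on {0..1} G"
    unfolding G_def using q by (intro continuous_intros continuous_on_powr') auto
  moreover have "(G has_vector_derivative t powr (q - 1)) (at t)" if "t \<in> {0<..<1}" for t
  proof -
    have "(G has_real_derivative q * t powr (q - 1) / q) (at t)"
      unfolding G_def using that by (auto intro!: derivative_eq_intros)
    then show ?thesis using q by (simp add: has_real_derivative_iff_has_vector_derivative)
  qed
  moreover have "(F has_vector_derivative F' t) (at t)" if "t \<in> {0<..<1}" for t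
    using has_real_derivative_regIncBeta[OF a b that]
    by (simp add: F_def F'_def has_real_derivative_iff_has_vector_derivative)
  ultimately show ?thesis
    using integration_by_parts_interior[OF bounded_bilinear_mult _ _ continuous_on_regIncBeta[OF a b]
        _ _ parts[unfolded F_def]]
    by (simp add: F_def)
qed

definition mellin_regIncBeta :: "real \<Rightarrow> real \<Rightarrow> real \<Rightarrow> real" where
  "mellin_regIncBeta q a b = integral {0..1} (\<lambda>t. t powr (q - 1) * regIncBeta t a b)"

lemma mellin_regIncBeta_le:
  fixes a b q K :: real and R :: "real \<Rightarrow> real"
  assumes a: "0 < a" and b: "0 < b" and q: "0 < q"
    and R: "\<And>u. u \<in> {0<..<1} \<Longrightarrow> (1 - u powr q) / q \<le> R u"
    and K: "((\<lambda>u. R u * (u powr (a - 1) * (1 - u) powr (b - 1))) has_integral K) {0<..<1}"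
  shows "mellin_regIncBeta q a b \<le> K / Beta a b"
proof -
  let ?h = "\<lambda>u. (1 - u powr q) / q * (u powr (a - 1) * (1 - u) powr (b - 1))"
  have "integral {0<..<1} ?h \<le> K"
    using integrable_one_minus_powr_mult_Beta_density[OF a b q] K R
    by (intro has_integral_le[OF integrable_integral K] mult_right_mono) auto
  have "mellin_regIncBeta q a b = integral {0<..<1} ?h / Beta a b"
    unfolding mellin_regIncBeta_def by (rule integral_unique[OF has_integral_powr_mult_regIncBeta[OF a b q]])
  also have "\<dots> \<le> K / Beta a b"
    using Beta_pos_real[OF a b] by (intro divide_right_mono \<open>integral {0<..<1} ?h \<le> K\<close>) simp
  finally show ?thesis .
qed

lemma integral_weighted_le_mellin_regIncBeta:
  fixes a b q :: real and w :: "real \<Rightarrow> real"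
  assumes a: "0 < a" and b: "0 < b" and q: "0 < q"
    and w: "continuous_on {0..1} w" "\<And>t. t \<in> {0..1} \<Longrightarrow> w t \<le> 1"
  shows "integral {0..1} (\<lambda>t. w t * (t powr (q - 1) * regIncBeta t a b)) \<le> mellin_regIncBeta q a b"
  unfolding mellin_regIncBeta_def
proof (rule integral_mult_le_integral[OF _ _ w])
  show "(\<lambda>t. t powr (q - 1) * regIncBeta t a b) integrable_on {0..1}"
    using has_integral_powr_mult_regIncBeta[OF a b q] by blast
  show "0 \<le> t powr (q - 1) * regIncBeta t a b" if "t \<in> {0..1}" for t
    using regIncBeta_nonneg[OF a b] that by simp
qed

lemma has_integral_Beta_density_shift:
  fixes a b m :: real
  assumes "0 < a + m" "0 < b"
  shows "((\<lambda>u. u powr m * (1 - u) * (u powr (a - 1) * (1 - u) powr (b - 1)))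
           has_integral Beta (a + m) (b + 1)) {0<..<1}"
proof -
  have "((\<lambda>u. u powr (a + m - 1) * (1 - u) powr (b + 1 - 1)) has_integral Beta (a + m) (b + 1)) {0<..<1}"
    using has_integral_Beta_real[of "a + m" "b + 1"] assms by (simp add: has_integral_Icc_iff_Ioo)
  moreover have "u powr (a + m - 1) * (1 - u) powr (b + 1 - 1)
                   = u powr m * (1 - u) * (u powr (a - 1) * (1 - u) powr (b - 1))"
    if "u \<in> {0<..<1}" for u
  proof -
    have "u powr (a + m - 1) = u powr m * u powr (a - 1)"
      using powr_add[of u m "a - 1"] by (simp add: algebra_simps)
    moreover have "(1 - u) powr (b + 1 - 1) = (1 - u) * (1 - u) powr (b - 1)"
      using that powr_mult_base[of "1 - u" "b - 1"] by simp
    ultimately show ?thesis by (simp only: mult_ac)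
  qed
  ultimately show ?thesis
    by (rule has_integral_cong[THEN iffD1, rotated])
qed

lemma mellin_regIncBeta_le_sqrt_bound:
  fixes a b q :: real
  assumes a: "1/2 < a" "a \<le> 1" and b: "0 < b" and q: "0 < q"
  shows "mellin_regIncBeta q a b \<le> b / (a - 1/2)"
proof -
  have "mellin_regIncBeta q a b \<le> Beta (a - 1/2) (b + 1) / Beta a b"
  proof (rule mellin_regIncBeta_le[OF _ b q])
    show "(1 - u powr q) / q \<le> u powr (- 1/2) * (1 - u)" if "u \<in> {0<..<1}" for u
      using one_sub_powr_div_le_neg_ln[of u q] neg_ln_le_one_minus_mult_powr[of u] that q
      by (simp add: mult.commute)
    show "((\<lambda>u. u powr (- 1/2) * (1 - u) * (u powr (a - 1) * (1 - u) powr (b - 1)))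
            has_integral Beta (a - 1/2) (b + 1)) {0<..<1}"
      using has_integral_Beta_density_shift[of a "- 1/2" b] a b by simp
  qed (use a in simp)
  also have "\<dots> \<le> Beta (a - 1/2) 1 * b"
  proof -
    have "Beta (a - 1/2) (b + 1) \<le> Beta (a - 1/2) 1"
      using a b by (intro Beta_real_mono) auto
    moreover have "1 / Beta a b \<le> b"
      using inverse_le_Beta[of a b] Beta_pos_real[of a b] a b by (simp add: divide_simps mult.commute)
    ultimately have "Beta (a - 1/2) (b + 1) * (1 / Beta a b) \<le> Beta (a - 1/2) 1 * b"
      using Beta_pos_real[of "a - 1/2" "b + 1"] Beta_pos_real[of a b] a b
      by (intro mult_mono) auto
    then show ?thesis by simp
  qed
  also have "\<dots> = b / (a - 1/2)"
    using Beta_right_one[of "a - 1/2"] a by simp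
  finally show ?thesis .
qed

lemma mellin_regIncBeta_le_quadratic_bound:
  fixes a b q c0 c1 c2 :: real
  assumes a: "0 < a" and b: "0 < b" and sum_one: "a + b = 1" and q: "0 < q"
    and bound: "\<And>u. u \<in> {0<..<1} \<Longrightarrow> 1 - u powr q \<le> (1 - u) * (c0 + c1 * u + c2 * u\<^sup>2)"
  shows "mellin_regIncBeta q a b \<le> (c0 * b + c1 * a * b / 2 + c2 * (a + 1) * a * b / 6) / q"
proof -
  let ?\<phi> = "\<lambda>u. u powr (a - 1) * (1 - u) powr (b - 1)"
  let ?K = "c0 * Beta a (b + 1) + c1 * Beta (a + 1) (b + 1) + c2 * Beta (a + 2) (b + 1)"
  have shift: "((\<lambda>u. u ^ n * (1 - u) * ?\<phi> u) has_integral Beta (a + n) (b + 1)) {0<..<1}" for n :: nat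
  proof -
    have "0 < a + real n" using a by simp
    from has_integral_Beta_density_shift[OF this b] show ?thesis
      by (rule has_integral_cong[THEN iffD1, rotated]) (auto simp: powr_realpow)
  qed
  have "((\<lambda>u. c0 * (u ^ 0 * (1 - u) * ?\<phi> u) + c1 * (u ^ 1 * (1 - u) * ?\<phi> u)
           + c2 * (u ^ 2 * (1 - u) * ?\<phi> u)) has_integral ?K) {0<..<1}"
    using has_integral_add[OF has_integral_add[OF has_integral_mult_right[OF shift[of 0]]
          has_integral_mult_right[OF shift[of 1]]] has_integral_mult_right[OF shift[of 2]]]
    by simp
  then have "((\<lambda>u. (1 - u) * (c0 + c1 * u + c2 * u\<^sup>2) / q * ?\<phi> u) has_integral ?K / q) {0<..<1}"
    by (rule has_integral_cong[THEN iffD1, rotated, OF has_integral_divide])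
       (simp add: algebra_simps power2_eq_square)
  then have "mellin_regIncBeta q a b \<le> ?K / q / Beta a b"
    by (rule mellin_regIncBeta_le[OF a b q, rotated]) (use bound q in \<open>auto intro: divide_right_mono\<close>)
  also have "\<dots> = (c0 * b + c1 * a * b / 2 + c2 * (a + 1) * a * b / 6) / q"
    unfolding Beta_plus1_right_sum_one[OF a b sum_one] Beta_plus1_plus1_sum_one[OF a b sum_one]
      Beta_plus2_plus1_sum_one[OF a b sum_one]
    using Beta_pos_real[OF a b] q by (simp add: field_simps)
  finally show ?thesis .
qed

lemma mellin_regIncBeta_bound_small_d:
  fixes \<alpha> p :: real
  assumes "0 < \<alpha>" "\<alpha> \<le> 1/19" "2 + 2*\<alpha> < p" "p \<le> 17/8 + 2*\<alpha>"
  shows "mellin_regIncBeta (2*p - 4*\<alpha> - 4) ((2 + \<alpha>) / p) (1 - (2 + \<alpha>) / p) \<le> 1 / (4 * (\<alpha> + 1))"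
proof -
  define d where "d = p - 2 - 2*\<alpha>"
  have p: "p = 2 + 2*\<alpha> + d" "0 < p" and d: "0 < d" "d \<le> 1/8"
    using assms by (auto simp: d_def)
  have a: "(2 + \<alpha>) / p - 1/2 = (2 - d) / (2 * p)" and b: "1 - (2 + \<alpha>) / p = (d + \<alpha>) / p"
    using p by (simp_all add: field_simps)
  have "mellin_regIncBeta (2*p - 4*\<alpha> - 4) ((2 + \<alpha>) / p) (1 - (2 + \<alpha>) / p)
          \<le> (1 - (2 + \<alpha>) / p) / ((2 + \<alpha>) / p - 1/2)"
    using assms p d a b by (intro mellin_regIncBeta_le_sqrt_bound) (auto simp: field_simps)
  also have "\<dots> = 2 * (d + \<alpha>) / (2 - d)"
    unfolding a b using p(2) d by (simp add: field_simps)
  also have "\<dots> \<le> 1 / (4 * (\<alpha> + 1))"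
  proof -
    have "(\<alpha> + 1) * (d + \<alpha>) \<le> (1/19 + 1) * (1/8 + 1/19)"
      using assms d by (intro mult_mono) auto
    then show ?thesis using assms d by (simp add: field_simps)
  qed
  finally show ?thesis .
qed

lemma cubic_ineq_medium_d:
  fixes \<alpha> d :: real
  assumes a0: "0 < \<alpha>" and a1: "\<alpha> \<le> 1/19" and d0: "1/8 \<le> d" and d1: "d \<le> 1/2"
  shows "(d + \<alpha>) * (2 * (2 + 2*\<alpha> + d) + (2 * d - 1) * (2 + \<alpha>)) * (\<alpha> + 1) \<le> d * (2 + 2*\<alpha> + d)\<^sup>2"
proof -
  have e: "d * (2 + 2*\<alpha> + d)\<^sup>2 - (d + \<alpha>) * (2 * (2 + 2*\<alpha> + d) + (2 * d - 1) * (2 + \<alpha>)) * (\<alpha> + 1)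
     = 2*d - 2*d^2 + d^3 - \<alpha>*(2 + 3*d + 4*d^2) - \<alpha>^2*(5 + 7*d + 2*d^2) - \<alpha>^3*(3 + 2*d)"
    by (simp add: algebra_simps power2_eq_square power3_eq_cube)
  have nonneg: "0 \<le> 2 + 3*d + 4*d^2" "0 \<le> 5 + 7*d + 2*d^2" "0 \<le> 3 + 2*d"
    using d0 by (auto intro!: add_nonneg_nonneg)
  have "\<alpha>^2 \<le> (1/19)^2" by (rule power_mono) (use a0 a1 in auto)
  then have \<alpha>2: "\<alpha>^2 \<le> 1/361" by (simp add: power2_eq_square)
  have "\<alpha>^3 \<le> (1/19)^3" by (rule power_mono) (use a0 a1 in auto)
  then have \<alpha>3: "\<alpha>^3 \<le> 1/6859" by (simp add: power3_eq_cube)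
  have m1: "\<alpha>*(2 + 3*d + 4*d^2) \<le> (1/19)*(2 + 3*d + 4*d^2)" using mult_right_mono[OF a1 nonneg(1)] .
  have m2: "\<alpha>^2*(5 + 7*d + 2*d^2) \<le> (1/361)*(5 + 7*d + 2*d^2)" using mult_right_mono[OF \<alpha>2 nonneg(2)] .
  have m3: "\<alpha>^3*(3 + 2*d) \<le> (1/6859)*(3 + 2*d)" using mult_right_mono[OF \<alpha>3 nonneg(3)] .
  have "0 \<le> (d - 1/8)*(1/2 - d)" by (intro mult_nonneg_nonneg) (use d0 d1 in auto)
  moreover have "(d - 1/8)*(1/2 - d) = 5/8*d - d^2 - 1/16" by (simp add: field_simps power2_eq_square)
  ultimately have dd: "d^2 \<le> 5/8*d - 1/16" by linarith
  have d3: "0 \<le> d^3" using d0 by simp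
  have "0 \<le> 2*d - 2*d^2 + d^3 - \<alpha>*(2 + 3*d + 4*d^2) - \<alpha>^2*(5 + 7*d + 2*d^2) - \<alpha>^3*(3 + 2*d)"
    using m1 m2 m3 dd d0 d1 by (simp add: algebra_simps) (use d3 in linarith)
  then show ?thesis using e by linarith
qed

lemma mellin_regIncBeta_bound_medium_d:
  fixes \<alpha> p :: real
  assumes "0 < \<alpha>" "\<alpha> \<le> 1/19" "17/8 + 2*\<alpha> \<le> p" "p \<le> 5/2 + 2*\<alpha>"
  shows "mellin_regIncBeta (2*p - 4*\<alpha> - 4) ((2 + \<alpha>) / p) (1 - (2 + \<alpha>) / p) \<le> 1 / (4 * (\<alpha> + 1))"
proof -
  define d where "d = p - 2 - 2*\<alpha>"
  define a b q where "a = (2 + \<alpha>) / p" and "b = 1 - (2 + \<alpha>) / p" and "q = 2*p - 4*\<alpha> - 4"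
  have p: "p = 2 + 2*\<alpha> + d" "0 < p" and d: "1/8 \<le> d" "d \<le> 1/2"
    using assms by (auto simp: d_def)
  have ab: "0 < a" "0 < b" "a + b = 1"
    using assms p(2) d by (auto simp: a_def b_def field_simps)
  have b: "b = (d + \<alpha>) / p" and q: "q = 2 * d"
    using p(2) by (simp_all add: b_def q_def d_def field_simps)
  have "mellin_regIncBeta q a b \<le> (1 * b + (q - 1) * a * b / 2 + 0 * (a + 1) * a * b / 6) / q"
  proof (rule mellin_regIncBeta_le_quadratic_bound[OF ab])
    show "1 - u powr q \<le> (1 - u) * (1 + (q - 1) * u + 0 * u\<^sup>2)" if "u \<in> {0<..<1}" for u
      using powr_mult_one_plus_le_powr[of u q 1] that d by (simp add: q algebra_simps)
  qed (use d in \<open>simp add: q\<close>)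
  also have "\<dots> = (d + \<alpha>) * (2 * p + (2 * d - 1) * (2 + \<alpha>)) / (4 * d * p\<^sup>2)"
    using p(2) d by (simp add: a_def b q field_simps power2_eq_square)
  also have "\<dots> \<le> 1 / (4 * (\<alpha> + 1))"
  proof -
    have "(d + \<alpha>) * (2 * p + (2 * d - 1) * (2 + \<alpha>)) * (\<alpha> + 1) \<le> d * p\<^sup>2"
      unfolding p(1) by (rule cubic_ineq_medium_d) (use assms d in auto)
    then show ?thesis
      using assms p(2) d by (simp add: field_simps)
  qed
  finally show ?thesis
    unfolding a_def b_def q_def .
qed

lemma quartic_ineq_large_d:
  fixes \<alpha> d :: real
  assumes a0: "0 < \<alpha>" and a1: "\<alpha> \<le> 1/15000" and d0: "1/2 \<le> d" and d1: "d \<le> 1"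
  shows "(d + \<alpha>) * ((2 + 2*\<alpha> + d)\<^sup>2 + (2 + \<alpha>) * (2 + 2*\<alpha> + d) / 2
           - (1 - d) * ((2 + \<alpha>) + (2 + 2*\<alpha> + d)) * (2 + \<alpha>) / 3) * (4 * (\<alpha> + 1))
         \<le> 2 * d * (2 + 2*\<alpha> + d) ^ 3"
proof -
  have e: "2 * d * (2 + 2*\<alpha> + d) ^ 3 - (d + \<alpha>) * ((2 + 2*\<alpha> + d)\<^sup>2 + (2 + \<alpha>) * (2 + 2*\<alpha> + d) / 2
           - (1 - d) * ((2 + \<alpha>) + (2 + 2*\<alpha> + d)) * (2 + \<alpha>) / 3) * (4 * (\<alpha> + 1))
     = 8/3*d - 4*d^2 + 16/3*d^3 + 2*d^4 - \<alpha>*(40/3 + 24*d + 50/3*d^2 - 4*d^3)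
       - \<alpha>^2*(44 + 170/3*d + 18*d^2 + 4/3*d^3) - \<alpha>^3*(140/3 + 34*d + 16/3*d^2) - \<alpha>^4*(16 + 4*d)"
    by (simp add: field_simps power2_eq_square power3_eq_cube power4_eq_xxxx)
  have dsq: "d^2 \<le> 1" using d0 d1 by (simp add: power_le_one)
  have dcu: "d^3 \<le> 1" using d0 d1 by (simp add: power_le_one)
  have dcu0: "0 \<le> d^3" using d0 by simp
  have x1: "40/3 + 24*d + 50/3*d^2 - 4*d^3 \<le> 54" using dsq dcu0 d1 by linarith
  have x2: "44 + 170/3*d + 18*d^2 + 4/3*d^3 \<le> 121" using dsq dcu d1 by linarith
  have x3: "140/3 + 34*d + 16/3*d^2 \<le> 86" using dsq d1 by linarith
  have x4: "16 + 4*d \<le> 20" using d1 by linarith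
  have \<alpha>1: "\<alpha> \<le> 1" using a1 by simp
  have \<alpha>2: "\<alpha>^2 \<le> \<alpha>" using a0 \<alpha>1 by (simp add: power2_eq_square mult_le_cancel_left1)
  have \<alpha>3: "\<alpha>^3 \<le> \<alpha>" using a0 \<alpha>1 by (simp add: power3_eq_cube mult_le_one mult_le_cancel_left1)
  have \<alpha>4: "\<alpha>^4 \<le> \<alpha>" using a0 \<alpha>1 by (simp add: power4_eq_xxxx mult_le_one mult_le_cancel_left1)
  have m1: "\<alpha>*(40/3 + 24*d + 50/3*d^2 - 4*d^3) \<le> \<alpha>*54" using x1 a0 by (intro mult_left_mono) auto
  have m2: "\<alpha>^2*(44 + 170/3*d + 18*d^2 + 4/3*d^3) \<le> \<alpha>^2*121" using x2 a0 by (intro mult_left_mono) auto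
  have m3: "\<alpha>^3*(140/3 + 34*d + 16/3*d^2) \<le> \<alpha>^3*86" using x3 a0 by (intro mult_left_mono) auto
  have m4: "\<alpha>^4*(16 + 4*d) \<le> \<alpha>^4*20" using x4 a0 by (intro mult_left_mono) auto
  have "(1/2) * d^2 \<le> d * d^2" using d0 by (intro mult_right_mono) auto
  then have d3: "(1/2) * d^2 \<le> d^3" by (simp add: power3_eq_cube power2_eq_square)
  have d4: "0 \<le> d^4" by simp
  have "0 \<le> (d - 1/2)*(1 - d)" by (intro mult_nonneg_nonneg) (use d0 d1 in auto)
  moreover have "(d - 1/2)*(1 - d) = 3/2*d - d^2 - 1/2" by (simp add: field_simps power2_eq_square)
  ultimately have dd: "d^2 \<le> 3/2*d - 1/2" by linarith
  have "0 \<le> 8/3*d - 4*d^2 + 16/3*d^3 + 2*d^4 - \<alpha>*(40/3 + 24*d + 50/3*d^2 - 4*d^3)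
       - \<alpha>^2*(44 + 170/3*d + 18*d^2 + 4/3*d^3) - \<alpha>^3*(140/3 + 34*d + 16/3*d^2) - \<alpha>^4*(16 + 4*d)"
    using m1 m2 m3 m4 \<alpha>2 \<alpha>3 \<alpha>4 a1 a0 d3 d4 dd d0 by linarith
  then show ?thesis using e by linarith
qed

lemma mellin_regIncBeta_bound_large_d:
  fixes \<alpha> p :: real
  assumes "0 < \<alpha>" "\<alpha> \<le> 1/15000" "5/2 + 2*\<alpha> \<le> p" "p \<le> 3 + 2*\<alpha>"
  shows "mellin_regIncBeta (2*p - 4*\<alpha> - 4) ((2 + \<alpha>) / p) (1 - (2 + \<alpha>) / p) \<le> 1 / (4 * (\<alpha> + 1))"
proof -
  define d where "d = p - 2 - 2*\<alpha>"
  define a b q where "a = (2 + \<alpha>) / p" and "b = 1 - (2 + \<alpha>) / p" and "q = 2*p - 4*\<alpha> - 4"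
  have p: "p = 2 + 2*\<alpha> + d" "0 < p" and d: "1/2 \<le> d" "d \<le> 1"
    using assms by (auto simp: d_def)
  have ab: "0 < a" "0 < b" "a + b = 1"
    using assms p(2) d by (auto simp: a_def b_def field_simps)
  have b: "b = (d + \<alpha>) / p" and q: "q = 2 * d"
    using p(2) by (simp_all add: b_def q_def d_def field_simps)
  have "mellin_regIncBeta q a b \<le> (1 * b + 1 * a * b / 2 + (q - 2) * (a + 1) * a * b / 6) / q"
  proof (rule mellin_regIncBeta_le_quadratic_bound[OF ab])
    show "1 - u powr q \<le> (1 - u) * (1 + 1 * u + (q - 2) * u\<^sup>2)" if "u \<in> {0<..<1}" for u
      using powr_mult_one_plus_le_powr[of u q 2] that d
      by (simp add: q algebra_simps power2_eq_square)
  qed (use d in \<open>simp add: q\<close>)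
  also have "\<dots> = (d + \<alpha>) * (p\<^sup>2 + (2 + \<alpha>) * p / 2 - (1 - d) * ((2 + \<alpha>) + p) * (2 + \<alpha>) / 3) / (2 * d * p ^ 3)"
    using p(2) d by (simp add: a_def b q field_simps power2_eq_square power3_eq_cube)
  also have "\<dots> \<le> 1 / (4 * (\<alpha> + 1))"
  proof -
    have "(d + \<alpha>) * (p\<^sup>2 + (2 + \<alpha>) * p / 2 - (1 - d) * ((2 + \<alpha>) + p) * (2 + \<alpha>) / 3) * (4 * (\<alpha> + 1))
            \<le> 2 * d * p ^ 3"
      unfolding p(1) by (rule quartic_ineq_large_d) (use assms d in auto)
    then show ?thesis
      using assms p(2) d by (simp add: field_simps)
  qed
  finally show ?thesis
    unfolding a_def b_def q_def .
qed

theorem proposition4p2: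
  fixes \<alpha> p :: real
  assumes "(0 < \<alpha> \<and> \<alpha> \<le> 1/19 \<and> 2 + 2*\<alpha> < p \<and> p < 5/2 + 2*\<alpha>) \<or>
           (0 < \<alpha> \<and> \<alpha> \<le> 1/15000 \<and> 5/2 + 2*\<alpha> \<le> p \<and> p \<le> 3 + 2*\<alpha>)"
  shows "integral {0..1} (\<lambda>t. regIncBeta t ((2 + \<alpha>) / p) (1 - (2 + \<alpha>) / p)
            * t powr (2*p - 4*\<alpha> - 5) * (1 - t^4) powr \<alpha>) - 1 / (4 * (\<alpha> + 1)) \<le> 0"
proof -
  define a q where "a = (2 + \<alpha>) / p" and "q = 2*p - 4*\<alpha> - 4"
  have \<alpha>: "0 < \<alpha>" and "2 + 2*\<alpha> < p" using assms by auto
  then have a: "0 < a" "0 < 1 - a" and q: "0 < q"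
    by (auto simp: a_def q_def field_simps)
  have "integral {0..1} (\<lambda>t. regIncBeta t a (1 - a) * t powr (2*p - 4*\<alpha> - 5) * (1 - t^4) powr \<alpha>)
          \<le> mellin_regIncBeta q a (1 - a)"
  proof -
    have "continuous_on {0..1} (\<lambda>t. (1 - t^4) powr \<alpha>)"
      using \<alpha> by (intro continuous_intros continuous_on_powr') (auto simp: power_le_one)
    moreover have "(1 - t^4) powr \<alpha> \<le> 1" if "t \<in> {0..1}" for t
      using \<alpha> that by (intro powr_le1) (auto simp: power_le_one)
    ultimately show ?thesis
      using integral_weighted_le_mellin_regIncBeta[OF a q, of "\<lambda>t. (1 - t^4) powr \<alpha>"]
      by (simp add: q_def mult_ac)
  qed
  also have "\<dots> \<le> 1 / (4 * (\<alpha> + 1))"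
    using assms mellin_regIncBeta_bound_small_d[of \<alpha> p] mellin_regIncBeta_bound_medium_d[of \<alpha> p]
      mellin_regIncBeta_bound_large_d[of \<alpha> p]
    unfolding a_def q_def by (cases "p \<le> 17/8 + 2*\<alpha>") auto
  finally show ?thesis by (simp add: a_def)
qed

end
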